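(* Let $G$ be a BDH graph with color classes $X$ and $Y$, and let $v,v'\in V(G)$. Define $G\star\{v,v'\}$ as follows: if $v$ and $v'$ lie in different color classes, $G\star\{v,v'\}=G$; if they lie in the same color class, $G\star\{v,v'\}$ is obtained from $G$ by adding a new vertex $\widehat{vv'}$ to that color class, adjacent exactly to the vertices of $N(v)\cap N(v')$. Then $G\star\{v,v'\}$ is a BDH graph.
   Context: A graph $G$ is distance hereditary if for every connected induced subgraph $H$ of $G$ and all $u,v\in V(H)$, $d_H(u,v)=d_G(u,v)$; a BDH graph is a bipartite distance hereditary graph. (Equivalently, a bipartite graph is BDH iff it has no induced chordless cycle of length $\ge 6$ and no induced domino, where a domino is $C_6$ plus a chord joining two antipodal vertices.) $N(v)$ denotes the neighborhood of $v$. *)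

theory Defs
  imports Main
begin

definition simple_graph :: "'a set \<Rightarrow> ('a \<Rightarrow> 'a \<Rightarrow> bool) \<Rightarrow> bool" where
  "simple_graph V E \<longleftrightarrow> finite V \<and> (\<forall>x y. E x y \<longrightarrow> E y x) \<and> (\<forall>x. \<not> E x x)
     \<and> (\<forall>x y. E x y \<longrightarrow> x \<in> V \<and> y \<in> V)"

definition nbhd :: "('a \<Rightarrow> 'a \<Rightarrow> bool) \<Rightarrow> 'a \<Rightarrow> 'a set" where
  "nbhd E v = {u. E v u}"

fun walk_in :: "('a \<Rightarrow> 'a \<Rightarrow> bool) \<Rightarrow> 'a set \<Rightarrow> 'a list \<Rightarrow> bool" where
  "walk_in E S [] = False"
| "walk_in E S [x] = (x \<in> S)"
| "walk_in E S (x # y # xs) = (x \<in> S \<and> E x y \<and> walk_in E S (y # xs))"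

text \<open>Distance between u and v in the subgraph induced by S (number of edges of a
shortest walk); only meaningful when a walk exists.\<close>

definition dist_in :: "('a \<Rightarrow> 'a \<Rightarrow> bool) \<Rightarrow> 'a set \<Rightarrow> 'a \<Rightarrow> 'a \<Rightarrow> nat" where
  "dist_in E S u v = (LEAST n. \<exists>p. walk_in E S p \<and> hd p = u \<and> last p = v \<and> length p = Suc n)"

definition connected_in :: "('a \<Rightarrow> 'a \<Rightarrow> bool) \<Rightarrow> 'a set \<Rightarrow> bool" where
  "connected_in E S \<longleftrightarrow> S \<noteq> {} \<and>
     (\<forall>u\<in>S. \<forall>v\<in>S. \<exists>p. walk_in E S p \<and> hd p = u \<and> last p = v)"

definition distance_hereditary :: "'a set \<Rightarrow> ('a \<Rightarrow> 'a \<Rightarrow> bool) \<Rightarrow> bool" where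
  "distance_hereditary V E \<longleftrightarrow>
     (\<forall>S \<subseteq> V. connected_in E S \<longrightarrow> (\<forall>u\<in>S. \<forall>v\<in>S. dist_in E S u v = dist_in E V u v))"

definition bipartition :: "'a set \<Rightarrow> ('a \<Rightarrow> 'a \<Rightarrow> bool) \<Rightarrow> 'a set \<Rightarrow> 'a set \<Rightarrow> bool" where
  "bipartition V E X Y \<longleftrightarrow> X \<inter> Y = {} \<and> X \<union> Y = V \<and>
     (\<forall>x\<in>X. \<forall>x'\<in>X. \<not> E x x') \<and> (\<forall>y\<in>Y. \<forall>y'\<in>Y. \<not> E y y')"

definition BDH :: "'a set \<Rightarrow> ('a \<Rightarrow> 'a \<Rightarrow> bool) \<Rightarrow> 'a set \<Rightarrow> 'a set \<Rightarrow> bool" where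
  "BDH V E X Y \<longleftrightarrow> simple_graph V E \<and> bipartition V E X Y \<and> distance_hereditary V E"

text \<open>The operation G \<star> {v,v'}; w is the new vertex (assumed fresh).\<close>

definition same_class :: "'a set \<Rightarrow> 'a set \<Rightarrow> 'a \<Rightarrow> 'a \<Rightarrow> bool" where
  "same_class X Y v v' \<longleftrightarrow> (v \<in> X \<and> v' \<in> X) \<or> (v \<in> Y \<and> v' \<in> Y)"

definition star_V :: "'a set \<Rightarrow> 'a set \<Rightarrow> 'a set \<Rightarrow> 'a \<Rightarrow> 'a \<Rightarrow> 'a \<Rightarrow> 'a set" where
  "star_V V X Y v v' w = (if same_class X Y v v' then insert w V else V)"

definition star_E :: "('a \<Rightarrow> 'a \<Rightarrow> bool) \<Rightarrow> 'a set \<Rightarrow> 'a set \<Rightarrow> 'a \<Rightarrow> 'a \<Rightarrow> 'a \<Rightarrow> 'a \<Rightarrow> 'a \<Rightarrow> bool" where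
  "star_E E X Y v v' w = (if same_class X Y v v' then
     (\<lambda>x y. E x y \<or> (x = w \<and> y \<in> nbhd E v \<inter> nbhd E v') \<or> (y = w \<and> x \<in> nbhd E v \<inter> nbhd E v'))
     else E)"

definition star_X :: "'a set \<Rightarrow> 'a set \<Rightarrow> 'a \<Rightarrow> 'a \<Rightarrow> 'a \<Rightarrow> 'a set" where
  "star_X X Y v v' w = (if v \<in> X \<and> v' \<in> X then insert w X else X)"

definition star_Y :: "'a set \<Rightarrow> 'a set \<Rightarrow> 'a \<Rightarrow> 'a \<Rightarrow> 'a \<Rightarrow> 'a set" where
  "star_Y X Y v v' w = (if v \<in> Y \<and> v' \<in> Y then insert w Y else Y)"

end

theory Submission imports Defs begin

text \<open>A graph is distance hereditary iff each of its induced paths is a shortest walk.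
  Let \<open>w\<close> be joined to the common neighbourhood \<open>C\<close> of \<open>a\<close> and \<open>b\<close>. An induced path
  avoiding \<open>w\<close> lives in the old graph. If \<open>w\<close> lies on an induced path \<open>p\<close>, we replace
  it by some \<open>c \<in> {a, b}\<close> not on \<open>p\<close> whose neighbours on \<open>p\<close> all lie in \<open>C\<close>: this
  yields an induced path of the old graph, while walks of the new graph map to walks of
  the old one of equal length, so \<open>p\<close> is shortest. A neighbour of \<open>c\<close> on \<open>p\<close> two or
  more steps from \<open>w\<close> must be exactly three steps away, since otherwise \<open>c\<close> gives a
  shortcut; for inner \<open>w\<close> and \<open>c = a\<close> this configuration is a domino, and for \<open>w\<close> at
  an end one of \<open>a\<close>, \<open>b\<close> misses the vertex three steps away.\<close>

section \<open>Walks, induced paths and shortest walks\<close>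

lemma walk_in_conv_nth:
  "walk_in E S p \<longleftrightarrow> p \<noteq> [] \<and> set p \<subseteq> S \<and> (\<forall>j. Suc j < length p \<longrightarrow> E (p!j) (p!Suc j))"
proof (induction E S p rule: walk_in.induct)
  case (3 E S x y xs)
  have "(\<forall>j. Suc j < length (x#y#xs) \<longrightarrow> E ((x#y#xs)!j) ((x#y#xs)!Suc j)) \<longleftrightarrow>
        E x y \<and> (\<forall>j. Suc j < length (y#xs) \<longrightarrow> E ((y#xs)!j) ((y#xs)!Suc j))"
    by (metis Suc_less_eq length_Cons nth_Cons_0 nth_Cons_Suc zero_less_Suc not0_implies_Suc)
  then show ?case using 3 by auto
qed auto

lemma walk_in_nonempty: "walk_in E S p \<Longrightarrow> p \<noteq> []"
  by (simp add: walk_in_conv_nth)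

lemma walk_in_mono: "walk_in E S p \<Longrightarrow> S \<subseteq> T \<Longrightarrow> walk_in E T p"
  by (auto simp: walk_in_conv_nth)

lemma walk_in_map:
  assumes "\<And>x y. x \<in> S \<Longrightarrow> y \<in> S \<Longrightarrow> E x y \<Longrightarrow> E' (f x) (f y)" and "f ` S \<subseteq> T"
    and "walk_in E S p"
  shows "walk_in E' T (map f p)"
  using assms unfolding walk_in_conv_nth by (auto simp: image_subset_iff subset_iff)

lemma walk_in_rev:
  assumes sym: "\<And>x y. E x y \<Longrightarrow> E y x" and p: "walk_in E S p"
  shows "walk_in E S (rev p)"
  unfolding walk_in_conv_nth
proof (intro conjI allI impI)
  fix j assume j: "Suc j < length (rev p)"
  then have "E (p ! (length p - Suc (Suc j))) (p ! Suc (length p - Suc (Suc j)))"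
    using p by (auto simp: walk_in_conv_nth)
  moreover have "Suc (length p - Suc (Suc j)) = length p - Suc j" using j by auto
  ultimately show "E (rev p ! j) (rev p ! Suc j)" using j sym by (auto simp: rev_nth)
qed (use p in \<open>auto simp: walk_in_conv_nth\<close>)

lemma walk_in_segment:
  assumes "walk_in E S p" and "l \<le> h" and "h < length p"
  shows "walk_in E S (map (nth p) [l..<Suc h])"
  using assms unfolding walk_in_conv_nth
  by (auto simp del: upt_Suc simp: nth_map_upt)

lemma hd_last_map_upt: "i \<le> j \<Longrightarrow> hd (map f [i..<Suc j]) = f i \<and> last (map f [i..<Suc j]) = f j"
  by (simp del: upt_Suc add: hd_map last_map)

lemma walk_in_append:
  "walk_in E S xs \<Longrightarrow> walk_in E S ys \<Longrightarrow> E (last xs) (hd ys) \<Longrightarrow> walk_in E S (xs @ ys)"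
proof (induction xs)
  case (Cons x xs)
  then show ?case by (cases xs; cases ys) auto
qed simp

lemma walk_in_take: "walk_in E S p \<Longrightarrow> 0 < n \<Longrightarrow> walk_in E S (take n p)"
  by (auto simp: walk_in_conv_nth dest: in_set_takeD)

lemma walk_in_drop: "walk_in E S p \<Longrightarrow> n < length p \<Longrightarrow> walk_in E S (drop n p)"
  by (auto simp: walk_in_conv_nth dest: in_set_dropD)

lemma walk_in_length_le_2:
  "walk_in E S r \<Longrightarrow> length r \<le> 2 \<Longrightarrow> hd r = last r \<or> E (hd r) (last r)"
  by (cases "(E, S, r)" rule: walk_in.cases) auto

definition induced_path :: "('a \<Rightarrow> 'a \<Rightarrow> bool) \<Rightarrow> 'a set \<Rightarrow> 'a list \<Rightarrow> bool" where
  "induced_path E S p \<longleftrightarrow> walk_in E S p \<and> distinct p \<and>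
     (\<forall>x<length p. \<forall>y<length p. E (p!x) (p!y) \<longrightarrow> x = Suc y \<or> y = Suc x)"

lemma induced_path_mono: "induced_path E S p \<Longrightarrow> S \<subseteq> T \<Longrightarrow> induced_path E T p"
  by (auto simp: induced_path_def walk_in_mono)

lemma induced_path_rev:
  assumes sym: "\<And>x y. E x y \<Longrightarrow> E y x" and p: "induced_path E S p"
  shows "induced_path E S (rev p)"
  unfolding induced_path_def
proof (intro conjI allI impI)
  show "walk_in E S (rev p)" using walk_in_rev sym p by (auto simp: induced_path_def)
  show "distinct (rev p)" using p by (simp add: induced_path_def)
  fix x y assume x: "x < length (rev p)" and y: "y < length (rev p)" and e: "E (rev p ! x) (rev p ! y)"
  then have "E (p ! (length p - Suc x)) (p ! (length p - Suc y))" by (simp add: rev_nth)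
  then have "length p - Suc x = Suc (length p - Suc y) \<or> length p - Suc y = Suc (length p - Suc x)"
    using p x y by (auto simp: induced_path_def)
  then show "x = Suc y \<or> y = Suc x" using x y by auto
qed

lemma induced_path_segment:
  assumes p: "induced_path E S p" and lh: "l \<le> h" "h < length p"
  shows "induced_path E S (map (nth p) [l..<Suc h])"
  unfolding induced_path_def
proof (intro conjI allI impI)
  show "walk_in E S (map ((!) p) [l..<Suc h])"
    using walk_in_segment p lh by (auto simp: induced_path_def)
  show "distinct (map ((!) p) [l..<Suc h])" using p lh
    by (auto simp: induced_path_def distinct_map inj_on_def nth_eq_iff_index_eq)
  fix x y assume "x < length (map ((!) p) [l..<Suc h])" "y < length (map ((!) p) [l..<Suc h])"
    "E (map ((!) p) [l..<Suc h] ! x) (map ((!) p) [l..<Suc h] ! y)"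
  then have "E (p ! (l + x)) (p ! (l + y))" "l + x < length p" "l + y < length p"
    using lh by (auto simp del: upt_Suc simp: nth_map_upt)
  then have "l + x = Suc (l + y) \<or> l + y = Suc (l + x)" using p unfolding induced_path_def by blast
  then show "x = Suc y \<or> y = Suc x" by auto
qed

lemma induced_path_nth_in: "induced_path E S p \<Longrightarrow> j < length p \<Longrightarrow> p!j \<in> S"
  by (auto simp: induced_path_def walk_in_conv_nth)

lemma induced_path_adjacent: "induced_path E S p \<Longrightarrow> Suc j < length p \<Longrightarrow> E (p!j) (p!Suc j)"
  by (simp add: induced_path_def walk_in_conv_nth)

lemma induced_path_chordless:
  "induced_path E S p \<Longrightarrow> x < length p \<Longrightarrow> y < length p \<Longrightarrow> E (p!x) (p!y) \<Longrightarrow> x = Suc y \<or> y = Suc x"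
  by (simp add: induced_path_def)

text \<open>An induced path is the only route inside its own vertex set: a walk there moves
  along the path one position at a time.\<close>

lemma induced_path_walk_within:
  assumes q: "induced_path E S q"
  shows "walk_in E (set q) r \<Longrightarrow> hd r = q!i \<Longrightarrow> last r = q!j \<Longrightarrow> i < length q \<Longrightarrow> j < length q
     \<Longrightarrow> j < i + length r \<and> i < j + length r"
proof (induction r arbitrary: i)
  case (Cons z rs)
  have d: "distinct q" and c: "\<forall>x<length q. \<forall>y<length q. E (q!x) (q!y) \<longrightarrow> x = Suc y \<or> y = Suc x"
    using q by (auto simp: induced_path_def)
  show ?case
  proof (cases rs)
    case Nil
    then have "i = j" using Cons.prems d nth_eq_iff_index_eq by auto
    then show ?thesis by simp
  next
    case (Cons z' rs')
    have "z' \<in> set q" using Cons.prems Cons by (cases rs') auto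
    then obtain i' where i': "i' < length q" "z' = q!i'" by (auto simp: in_set_conv_nth)
    have "E (q!i) (q!i')" using Cons.prems Cons i' by simp
    then have "i = Suc i' \<or> i' = Suc i" using c i' Cons.prems by blast
    moreover have "j < i' + length rs \<and> i' < j + length rs"
      using Cons.IH[of i'] Cons.prems Cons i' by simp
    ultimately show ?thesis by auto
  qed
qed simp

lemma connected_in_induced_path:
  assumes sym: "\<And>x y. E x y \<Longrightarrow> E y x" and q: "induced_path E S q"
  shows "connected_in E (set q)"
  unfolding connected_in_def
proof (intro conjI ballI)
  have qS: "walk_in E (set q) q" using q by (auto simp: induced_path_def walk_in_conv_nth)
  show "set q \<noteq> {}" using walk_in_nonempty[OF qS] by simp
  fix u x assume "u \<in> set q" "x \<in> set q"
  then obtain i j where ij: "i < length q" "j < length q" "u = q!i" "x = q!j"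
    by (auto simp: in_set_conv_nth)
  show "\<exists>p. walk_in E (set q) p \<and> hd p = u \<and> last p = x"
  proof (cases "i \<le> j")
    case True
    then show ?thesis using walk_in_segment[OF qS True ij(2)] ij
      by (intro exI[of _ "map (nth q) [i..<Suc j]"]) (simp del: upt_Suc add: hd_last_map_upt)
  next
    case False
    then show ?thesis using walk_in_rev[OF sym walk_in_segment[OF qS _ ij(1)], of j] ij
      by (intro exI[of _ "rev (map (nth q) [j..<Suc i])"])
        (auto simp del: upt_Suc simp: hd_rev last_rev hd_last_map_upt)
  qed
qed

definition shortest_walk :: "('a \<Rightarrow> 'a \<Rightarrow> bool) \<Rightarrow> 'a set \<Rightarrow> 'a list \<Rightarrow> bool" where
  "shortest_walk E S p \<longleftrightarrow> walk_in E S p \<and>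
     (\<forall>r. walk_in E S r \<longrightarrow> hd r = hd p \<longrightarrow> last r = last p \<longrightarrow> length p \<le> length r)"

lemma shortest_walkI:
  assumes "walk_in E S p"
    and "\<And>r. walk_in E S r \<Longrightarrow> hd r = hd p \<Longrightarrow> last r = last p \<Longrightarrow> length p \<le> length r"
  shows "shortest_walk E S p"
  using assms by (simp add: shortest_walk_def)

lemma shortest_walkD:
  "shortest_walk E S p \<Longrightarrow> walk_in E S r \<Longrightarrow> hd r = hd p \<Longrightarrow> last r = last p \<Longrightarrow> length p \<le> length r"
  by (simp add: shortest_walk_def)

lemma shortest_walk_rev:
  assumes sym: "\<And>x y. E x y \<Longrightarrow> E y x" and p: "shortest_walk E S (rev p)"
  shows "shortest_walk E S p"
proof (rule shortest_walkI)
  have pw: "walk_in E S (rev p)" using p by (simp add: shortest_walk_def)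
  show "walk_in E S p" using walk_in_rev[OF sym pw] by simp
  fix r assume r: "walk_in E S r" "hd r = hd p" "last r = last p"
  have "r \<noteq> []" "p \<noteq> []" using r(1) pw by (auto dest: walk_in_nonempty)
  then have "length (rev p) \<le> length (rev r)"
    using shortest_walkD[OF p walk_in_rev[OF sym r(1)]] r by (simp add: hd_rev last_rev)
  then show "length p \<le> length r" by simp
qed

lemma induced_path_shortest_if_length_le_3:
  assumes irr: "\<And>x. \<not> E x x" and p: "induced_path E S p" and len: "length p \<le> 3"
  shows "shortest_walk E S p"
proof (rule shortest_walkI)
  show pw: "walk_in E S p" using p by (simp add: induced_path_def)
  fix r assume r: "walk_in E S r" "hd r = hd p" "last r = last p"
  show "length p \<le> length r"
  proof (rule ccontr)
    assume "\<not> length p \<le> length r"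
    then have lr: "length r < length p" "length r \<le> 2" using len by auto
    have rne: "r \<noteq> []" using r(1) by (rule walk_in_nonempty)
    then have "Suc 0 < length p" using lr by (cases r) auto
    moreover have pne: "p \<noteq> []" using calculation by auto
    ultimately have ends: "hd p = p!0" "last p = p!(length p - 1)" "0 < length p - 1"
      by (auto simp: hd_conv_nth last_conv_nth)
    then have "p!0 \<noteq> p!(length p - 1)"
      using p pne nth_eq_iff_index_eq[of p 0 "length p - 1"] by (simp add: induced_path_def)
    then have "E (p!0) (p!(length p - 1))"
      using walk_in_length_le_2[OF r(1) lr(2)] r ends by auto
    then have "length p = 2" using induced_path_chordless[OF p, of 0 "length p - 1"] pne by auto
    then have "length r = 1" using lr rne by (cases r) auto
    then have "hd r = last r" by (cases r) auto
    then show False using \<open>E (p!0) (p!(length p - 1))\<close> r ends irr by metis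
  qed
qed

lemma dist_in_less_length:
  assumes "walk_in E S p" "hd p = u" "last p = v"
  shows "dist_in E S u v < length p"
proof -
  have "dist_in E S u v \<le> length p - 1"
  proof -
    have "p \<noteq> []" using assms(1) by (rule walk_in_nonempty)
    then show ?thesis
      unfolding dist_in_def by (intro Least_le exI[of _ p]) (use assms in auto)
  qed
  then show ?thesis using walk_in_nonempty[OF assms(1)] by (cases p) auto
qed

lemma obtain_walk_of_length_dist_in:
  assumes "walk_in E S p" "hd p = u" "last p = v"
  obtains q where "walk_in E S q" "hd q = u" "last q = v" "length q = Suc (dist_in E S u v)"
proof -
  have "\<exists>n q. walk_in E S q \<and> hd q = u \<and> last q = v \<and> length q = Suc n"
    using assms walk_in_nonempty[OF assms(1)] by (intro exI[of _ "length p - 1"] exI[of _ p]) auto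
  from LeastI_ex[OF this] show ?thesis using that unfolding dist_in_def by blast
qed

lemma shortest_walk_no_shortcut:
  assumes p: "shortest_walk E S p" and xy: "x < y" "y \<le> length p"
    and last: "y < length p \<or> p!x = last p" and w: "walk_in E S (take (Suc x) p @ drop y p)"
  shows "y = Suc x"
proof -
  have "p \<noteq> []" using xy by auto
  then have "hd (take (Suc x) p @ drop y p) = hd p" by simp
  moreover have "last (take (Suc x) p @ drop y p) = last p"
  proof (cases "y < length p")
    case False
    then show ?thesis using last xy by (simp add: take_Suc_conv_app_nth)
  qed simp
  ultimately have "length p \<le> length (take (Suc x) p @ drop y p)" using shortest_walkD[OF p w] by simp
  then show ?thesis using xy by simp
qed

lemma shortest_walk_induced_path:
  assumes sym: "\<And>x y. E x y \<Longrightarrow> E y x" and irr: "\<And>x. \<not> E x x" and p: "shortest_walk E S p"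
  shows "induced_path E S p"
proof -
  have w: "walk_in E S p" using p by (simp add: shortest_walk_def)
  have chordless: "\<not> E (p!x) (p!y)" if xy: "Suc x < y" "y < length p" for x y
  proof
    assume "E (p!x) (p!y)"
    then have "walk_in E S (take (Suc x) p @ drop y p)" using w xy
      by (intro walk_in_append walk_in_take walk_in_drop) (auto simp: hd_drop_conv_nth take_Suc_conv_app_nth)
    then show False using shortest_walk_no_shortcut[OF p, of x y] xy by simp
  qed
  have distinct: "p!x \<noteq> p!y" if xy: "x < y" "y < length p" for x y
  proof
    assume e: "p!x = p!y"
    have "walk_in E S (take (Suc x) p @ drop (Suc y) p)"
    proof (cases "Suc y < length p")
      case True
      have "E (p!y) (p!Suc y)" using w True by (simp add: walk_in_conv_nth)
      then show ?thesis using w xy e True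
        by (intro walk_in_append walk_in_take walk_in_drop) (auto simp: hd_drop_conv_nth take_Suc_conv_app_nth)
    qed (use w in \<open>auto intro: walk_in_take\<close>)
    moreover have "Suc y < length p \<or> p!x = last p"
    proof (cases "Suc y < length p")
      case False
      then have "y = length p - 1" using xy by simp
      moreover have "p \<noteq> []" using xy by auto
      ultimately show ?thesis using e by (simp add: last_conv_nth)
    qed simp
    ultimately show False using shortest_walk_no_shortcut[OF p, of x "Suc y"] xy by simp
  qed
  show ?thesis
    unfolding induced_path_def
  proof (intro conjI allI impI)
    show "walk_in E S p" by (rule w)
    show "distinct p" unfolding distinct_conv_nth by (metis distinct linorder_neqE_nat)
    fix x y assume xy: "x < length p" "y < length p" "E (p!x) (p!y)"
    then have "x \<noteq> y" using irr by auto
    then show "x = Suc y \<or> y = Suc x"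
      using chordless xy sym by (metis linorder_neqE_nat Suc_lessI)
  qed
qed

lemma distance_hereditary_induced_path_shortest:
  assumes dh: "distance_hereditary V E" and sym: "\<And>x y. E x y \<Longrightarrow> E y x"
    and q: "induced_path E V q"
  shows "shortest_walk E V q"
proof (rule shortest_walkI)
  have qV: "walk_in E V q" using q by (simp add: induced_path_def)
  then have qne: "q \<noteq> []" and qS: "walk_in E (set q) q" and sub: "set q \<subseteq> V"
    by (auto simp: walk_in_conv_nth)
  show "walk_in E V q" by (rule qV)
  fix r assume r: "walk_in E V r" "hd r = hd q" "last r = last q"
  have eq: "dist_in E (set q) (hd q) (last q) = dist_in E V (hd q) (last q)"
    using dh sub connected_in_induced_path[OF sym q] qne unfolding distance_hereditary_def by simp
  obtain p where p: "walk_in E (set q) p" "hd p = hd q" "last p = last q"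
    "length p = Suc (dist_in E (set q) (hd q) (last q))"
    using obtain_walk_of_length_dist_in[OF qS] by blast
  have "length q - 1 < length p"
    using induced_path_walk_within[OF q p(1), of 0 "length q - 1"] p qne
    by (simp add: hd_conv_nth last_conv_nth)
  moreover have "dist_in E V (hd q) (last q) < length r" using dist_in_less_length[OF r] .
  ultimately show "length q \<le> length r" using eq p(4) by linarith
qed

lemma distance_hereditaryI:
  assumes sym: "\<And>x y. E x y \<Longrightarrow> E y x" and irr: "\<And>x. \<not> E x x"
    and shortest: "\<And>p. induced_path E V p \<Longrightarrow> shortest_walk E V p"
  shows "distance_hereditary V E"
  unfolding distance_hereditary_def
proof (intro allI impI ballI)
  fix S u v assume S: "S \<subseteq> V" and c: "connected_in E S" and u: "u \<in> S" and v: "v \<in> S"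
  obtain p0 where "walk_in E S p0" "hd p0 = u" "last p0 = v"
    using c u v unfolding connected_in_def by blast
  then obtain p where p: "walk_in E S p" "hd p = u" "last p = v" "length p = Suc (dist_in E S u v)"
    by (rule obtain_walk_of_length_dist_in)
  have "shortest_walk E S p"
    using p dist_in_less_length[of E S _ u v] by (intro shortest_walkI) force+
  then have "induced_path E S p" using sym irr by (intro shortest_walk_induced_path)
  then have "shortest_walk E V p" using S by (blast intro: shortest induced_path_mono)
  have pV: "walk_in E V p" using p(1) S by (rule walk_in_mono)
  then obtain r where r: "walk_in E V r" "hd r = u" "last r = v" "length r = Suc (dist_in E V u v)"
    using p by (blast intro: obtain_walk_of_length_dist_in)
  have "length p \<le> length r" using shortest_walkD[OF \<open>shortest_walk E V p\<close> r(1)] r p by simp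
  moreover have "dist_in E V u v < length p" using dist_in_less_length[OF pV] p by simp
  ultimately show "dist_in E S u v = dist_in E V u v" using p(4) r(4) by simp
qed

section \<open>Adding a vertex adjacent to a common neighbourhood\<close>

locale bdh_extension =
  fixes V X Y :: "'a set" and E :: "'a \<Rightarrow> 'a \<Rightarrow> bool" and a b w :: 'a
  assumes bdh: "BDH V E X Y" and a_in_X: "a \<in> X" and b_in_X: "b \<in> X" and w_notin_V: "w \<notin> V"
begin

definition C :: "'a set" where "C = nbhd E a \<inter> nbhd E b"

definition E' :: "'a \<Rightarrow> 'a \<Rightarrow> bool" where
  "E' = (\<lambda>x y. E x y \<or> (x = w \<and> y \<in> C) \<or> (y = w \<and> x \<in> C))"

abbreviation V' :: "'a set" where "V' \<equiv> insert w V"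

lemma E_sym: "E x y \<Longrightarrow> E y x"
  and E_irrefl: "\<not> E x x"
  and E_in_V: "E x y \<Longrightarrow> x \<in> V \<and> y \<in> V"
  using bdh by (auto simp: BDH_def simple_graph_def)

lemma distance_hereditary: "distance_hereditary V E"
  using bdh by (simp add: BDH_def)

lemma induced_path_shortest_walk_E: "induced_path E V q \<Longrightarrow> shortest_walk E V q"
  using distance_hereditary_induced_path_shortest[OF distance_hereditary] E_sym by blast

lemma X_Y_disjoint: "X \<inter> Y = {}"
  and X_Un_Y: "X \<union> Y = V"
  and X_independent: "x \<in> X \<Longrightarrow> x' \<in> X \<Longrightarrow> \<not> E x x'"
  and Y_independent: "y \<in> Y \<Longrightarrow> y' \<in> Y \<Longrightarrow> \<not> E y y'"
  using bdh by (auto simp: BDH_def bipartition_def)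

lemma triangle_free: "E x y \<Longrightarrow> E y z \<Longrightarrow> \<not> E x z"
  using E_in_V X_Un_Y X_independent Y_independent by blast

lemma a_in_V: "a \<in> V" and b_in_V: "b \<in> V"
  using a_in_X b_in_X X_Un_Y by auto

lemma C_subset_V: "C \<subseteq> V"
  using E_in_V by (auto simp: C_def nbhd_def)

lemma w_notin_C: "w \<notin> C"
  using C_subset_V w_notin_V by auto

lemma C_subset_nbhd_a: "C \<subseteq> nbhd E a" and C_subset_nbhd_b: "C \<subseteq> nbhd E b"
  by (auto simp: C_def)

lemma not_E_w: "\<not> E w y" "\<not> E y w"
  using E_in_V w_notin_V by auto

lemma E'_w_iff: "E' w y \<longleftrightarrow> y \<in> C" "E' y w \<longleftrightarrow> y \<in> C"
  using not_E_w w_notin_C by (auto simp: E'_def)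

lemma E'_iff_E: "x \<noteq> w \<Longrightarrow> y \<noteq> w \<Longrightarrow> E' x y \<longleftrightarrow> E x y"
  by (auto simp: E'_def)

lemma E'_sym: "E' x y \<Longrightarrow> E' y x"
  using E_sym by (auto simp: E'_def)

lemma E'_irrefl: "\<not> E' x x"
  using E_irrefl w_notin_C by (auto simp: E'_def)

lemma E_imp_E': "E x y \<Longrightarrow> E' x y"
  by (simp add: E'_def)

definition replace_w :: "'a \<Rightarrow> 'a \<Rightarrow> 'a" where
  "replace_w c u = (if u = w then c else u)"

lemma walk_in_replace_w:
  assumes c: "c \<in> V" "C \<subseteq> nbhd E c" and r: "walk_in E' V' r"
  shows "walk_in E V (map (replace_w c) r)"
proof (rule walk_in_map[OF _ _ r])
  fix x y assume "E' x y"
  then show "E (replace_w c x) (replace_w c y)"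
    using c E'_w_iff E'_iff_E E_irrefl w_notin_C
    by (cases "x = w"; cases "y = w") (auto simp: replace_w_def nbhd_def E_sym)
qed (use c in \<open>auto simp: replace_w_def\<close>)

text \<open>Minimality is transported along \<open>replace_w c\<close>, which preserves the lengths of walks.\<close>

lemma shortest_walk_if_replace_w_induced:
  assumes c: "c \<in> V" "C \<subseteq> nbhd E c" and p: "walk_in E' V' p"
    and q: "induced_path E V (map (replace_w c) p)"
  shows "shortest_walk E' V' p"
proof (rule shortest_walkI[OF p])
  fix r assume r: "walk_in E' V' r" "hd r = hd p" "last r = last p"
  have "r \<noteq> []" "p \<noteq> []" using r(1) p by (auto dest: walk_in_nonempty)
  then have "hd (map (replace_w c) r) = hd (map (replace_w c) p)"
    "last (map (replace_w c) r) = last (map (replace_w c) p)"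
    using r by (simp_all add: hd_map last_map)
  then have "length (map (replace_w c) p) \<le> length (map (replace_w c) r)"
    using shortest_walkD[OF induced_path_shortest_walk_E[OF q] walk_in_replace_w[OF c r(1)]] by simp
  then show "length p \<le> length r" by simp
qed

lemma induced_path_avoiding_w:
  "induced_path E' V' p \<Longrightarrow> w \<notin> set p \<Longrightarrow> induced_path E V p"
  unfolding induced_path_def walk_in_conv_nth
  by (auto simp: E'_iff_E E_imp_E') (metis E'_iff_E nth_mem Suc_lessD)+

lemma shortest_walk_avoiding_w:
  assumes p: "induced_path E' V' p" and "w \<notin> set p"
  shows "shortest_walk E' V' p"
proof -
  have "map (replace_w a) p = p" using assms(2) by (induction p) (auto simp: replace_w_def)
  then show ?thesis using shortest_walk_if_replace_w_induced[OF a_in_V C_subset_nbhd_a, of p]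
      induced_path_avoiding_w[OF assms] p by (simp add: induced_path_def)
qed

lemma induced_path_replace_w:
  assumes p: "induced_path E' V' p" and c: "c \<in> V" "C \<subseteq> nbhd E c" and cp: "c \<notin> set p"
    and nbrs: "\<forall>u\<in>set p. E c u \<longrightarrow> u \<in> C"
  shows "induced_path E V (map (replace_w c) p)"
  unfolding induced_path_def
proof (intro conjI allI impI)
  have pw: "walk_in E' V' p" and pd: "distinct p"
    and pc: "\<forall>x<length p. \<forall>y<length p. E' (p!x) (p!y) \<longrightarrow> x = Suc y \<or> y = Suc x"
    using p by (auto simp: induced_path_def)
  show "walk_in E V (map (replace_w c) p)" by (rule walk_in_replace_w[OF c pw])
  have "inj_on (replace_w c) (set p)" using cp unfolding inj_on_def replace_w_def by auto
  then show "distinct (map (replace_w c) p)" using pd by (simp add: distinct_map)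
  fix x y assume xy: "x < length (map (replace_w c) p)" "y < length (map (replace_w c) p)"
    and e: "E (map (replace_w c) p ! x) (map (replace_w c) p ! y)"
  have "E' (p!x) (p!y)"
  proof (cases "p!x = w \<or> p!y = w")
    case True
    then have "p!x \<noteq> p!y" using xy e E_irrefl by (auto simp: replace_w_def)
    then show ?thesis
      using True xy e nbrs E'_w_iff E_sym by (auto simp: replace_w_def)
  next
    case False
    then show ?thesis using xy e by (auto simp: replace_w_def E'_iff_E)
  qed
  then show "x = Suc y \<or> y = Suc x" using pc xy by auto
qed

lemma shortest_walk_by_replacement:
  assumes "induced_path E' V' p" and "c \<in> V" "C \<subseteq> nbhd E c" and "c \<notin> set p"
    and "\<forall>u\<in>set p. E c u \<longrightarrow> u \<in> C"
  shows "shortest_walk E' V' p"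
  using shortest_walk_if_replace_w_induced[OF assms(2,3)] induced_path_replace_w[OF assms] assms(1)
  by (simp add: induced_path_def)

lemma induced_path_w_unique:
  assumes p: "induced_path E' V' p" and i: "p!i = w" "i < length p" and j: "j < length p" "j \<noteq> i"
  shows "p!j \<noteq> w" "p!j \<in> V"
proof -
  show "p!j \<noteq> w" using p i j nth_eq_iff_index_eq by (metis induced_path_def)
  then show "p!j \<in> V" using induced_path_nth_in[OF p j(1)] by auto
qed

lemma induced_path_neighbours_of_w:
  assumes p: "induced_path E' V' p" and i: "p!i = w" "i < length p"
  shows "Suc i < length p \<Longrightarrow> p!Suc i \<in> C" and "0 < i \<Longrightarrow> p!(i - 1) \<in> C"
  using induced_path_adjacent[OF p, of i] induced_path_adjacent[OF p, of "i - 1"] i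
  by (auto simp: E'_w_iff)

text \<open>Let \<open>w\<close> sit at position \<open>i\<close> of an induced path. A vertex \<open>c\<close> seeing all of \<open>C\<close>
  is a common neighbour of positions \<open>i + 1\<close> and \<open>j\<close>; as the segment between them is an
  induced path of the original graph, it has at most three vertices.\<close>

lemma neighbour_beyond_w:
  assumes p: "induced_path E' V' p" and i: "p!i = w" and c: "c \<in> V" "C \<subseteq> nbhd E c"
    and j: "i + 2 \<le> j" "j < length p" and e: "E c (p!j)"
  shows "j = i + 3"
proof -
  have not_w: "p!t \<noteq> w" "p!t \<in> V" if "Suc i \<le> t" "t \<le> j" for t
    using induced_path_w_unique[OF p i, of t] that j by auto
  have "E c (p!Suc i)" using induced_path_neighbours_of_w(1)[OF p i] j c by (auto simp: nbhd_def)
  moreover have "E (p!Suc i) (p!Suc (Suc i))"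
    using induced_path_adjacent[OF p, of "Suc i"] j not_w[of "Suc i"] not_w[of "Suc (Suc i)"]
    by (simp add: E'_iff_E)
  ultimately have "j \<noteq> i + 2" using triangle_free e by auto
  moreover have "\<not> i + 4 \<le> j"
  proof
    assume j4: "i + 4 \<le> j"
    define q where "q = map (nth p) [Suc i..<Suc j]"
    have "induced_path E' V' q" unfolding q_def using induced_path_segment[OF p _ j(2)] j by simp
    moreover have "w \<notin> set q"
    proof
      assume "w \<in> set q"
      then obtain t where "Suc i \<le> t" "t \<le> j" "p!t = w"
        unfolding q_def by (auto simp del: upt_Suc simp: less_Suc_eq_le)
      then show False using not_w(1) by blast
    qed
    ultimately have q: "induced_path E V q" by (rule induced_path_avoiding_w)
    have r: "walk_in E V [p!Suc i, c, p!j]"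
      using not_w[of "Suc i"] not_w[of j] c e \<open>E c (p!Suc i)\<close> j E_sym by auto
    have "length q \<le> length [p!Suc i, c, p!j]"
      by (rule shortest_walkD[OF induced_path_shortest_walk_E[OF q] r]) (use j in \<open>auto simp del: upt_Suc simp: q_def hd_last_map_upt\<close>)
    then show False using j4 unfolding q_def by simp
  qed
  ultimately show ?thesis using j by simp
qed

text \<open>If \<open>w\<close> is an inner vertex \<open>p!i\<close> and \<open>a\<close> is adjacent to \<open>p!(i+3)\<close>, then
  \<open>b, p!(i-1), a, p!(i+3), p!(i+2)\<close> is an induced path of the original graph (the
  remains of a domino) that the walk \<open>b, p!(i+1), p!(i+2)\<close> shortcuts.\<close>

lemma no_domino:
  assumes p: "induced_path E' V' p" and i: "p!i = w" "0 < i" "i + 3 < length p"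
    and e: "E a (p!(i + 3))"
  shows False
proof -
  define P0 P1 P2 P3 where "P0 = p!(i - 1)" and "P1 = p!Suc i" and "P2 = p!(i + 2)" and "P3 = p!(i + 3)"
  have C01: "P0 \<in> C" "P1 \<in> C" unfolding P0_def P1_def using induced_path_neighbours_of_w[OF p i(1)] i by auto
  have in_V: "P0 \<noteq> w" "P1 \<noteq> w" "P2 \<noteq> w" "P3 \<noteq> w" "P0 \<in> V" "P1 \<in> V" "P2 \<in> V" "P3 \<in> V"
    unfolding P0_def P1_def P2_def P3_def using induced_path_w_unique[OF p i(1)] i by auto
  have chordless: "x = Suc y \<or> y = Suc x" if "x < length p" "y < length p" "E (p!x) (p!y)" for x y
    using induced_path_chordless[OF p] E_imp_E' that by blast
  have "\<not> E b P3"
  proof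
    assume "E b P3"
    then have "E' (p!i) (p!(i + 3))" using e i E'_w_iff unfolding C_def P3_def by (simp add: nbhd_def)
    then show False using induced_path_chordless[OF p, of i "i + 3"] i by simp
  qed
  moreover have e12: "E P1 P2" and "E P2 P3"
    using induced_path_adjacent[OF p, of "Suc i"] induced_path_adjacent[OF p, of "i + 2"] i in_V E'_iff_E
    unfolding P1_def P2_def P3_def by (simp_all add: numeral_eq_Suc)
  moreover have "\<not> E P0 (p!k)" if "i + 2 \<le> k" "k < length p" for k
  proof
    assume "E P0 (p!k)"
    then have "i - 1 = Suc k \<or> k = Suc (i - 1)" using chordless[of "i - 1" k] i that unfolding P0_def by simp
    then show False using i that by arith
  qed
  then have "\<not> E P0 P3" "\<not> E P0 P2" using i unfolding P2_def P3_def by auto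
  moreover have "\<not> E b a" using X_independent a_in_X b_in_X by blast
  moreover have "E b P0" "E b P1" "E a P0" "E a P1"
    using C01 C_subset_nbhd_a C_subset_nbhd_b by (auto simp: nbhd_def)
  moreover have "E a P3" using e unfolding P3_def .
  ultimately have "induced_path E V [b, P0, a, P3, P2]"
    using triangle_free[of b P1 P2] triangle_free[of a P1 P2] E_irrefl E_sym in_V a_in_V b_in_V
    by (auto simp: induced_path_def less_Suc_eq numeral_eq_Suc)
  moreover have "walk_in E V [b, P1, P2]" using \<open>E b P1\<close> e12 in_V b_in_V by auto
  ultimately have "length [b, P0, a, P3, P2] \<le> length [b, P1, P2]"
    by (rule shortest_walkD[OF induced_path_shortest_walk_E]) simp_all
  then show False by simp
qed

lemma a_not_adjacent_beyond_w:
  assumes p: "induced_path E' V' p" and i: "p!i = w" "0 < i" and j: "i + 2 \<le> j" "j < length p"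
  shows "\<not> E a (p!j)"
proof
  assume e: "E a (p!j)"
  then have "j = i + 3" using neighbour_beyond_w[OF p i(1) a_in_V C_subset_nbhd_a j] by simp
  then show False using no_domino[OF p i] e j by simp
qed

lemma replacement_for_w_first:
  assumes p: "induced_path E' V' p" and w: "p!0 = w" and len: "4 \<le> length p"
    and c: "c \<in> V" "C \<subseteq> nbhd E c" "\<not> E c (p!3)"
  shows "c \<notin> set p" and "\<forall>u\<in>set p. E c u \<longrightarrow> u \<in> C"
proof -
  have pne: "p \<noteq> []" using len by auto
  have p1: "p!1 \<in> C" using induced_path_neighbours_of_w(1)[OF p w] len pne by simp
  have not_w: "p!j \<noteq> w" "p!j \<in> V" if "j < length p" "j \<noteq> 0" for j
    using induced_path_w_unique[OF p w _ that] pne by auto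
  have "E c (p!1)" using p1 c by (auto simp: nbhd_def)
  show "c \<notin> set p"
  proof
    assume "c \<in> set p"
    then obtain j where j: "j < length p" "c = p!j" by (auto simp: in_set_conv_nth)
    have "j \<noteq> 0" using j w c(1) w_notin_V by metis
    then have "j = 2"
      using induced_path_chordless[OF p j(1), of 1] E_imp_E'[OF \<open>E c (p!1)\<close>] j len by auto
    then have "E c (p!3)"
      using induced_path_adjacent[OF p, of 2] j not_w[of 2] not_w[of 3] len E'_iff_E by simp
    then show False using c by simp
  qed
  show "\<forall>u\<in>set p. E c u \<longrightarrow> u \<in> C"
  proof (intro ballI impI)
    fix u assume "u \<in> set p" "E c u"
    then obtain j where j: "j < length p" "u = p!j" by (auto simp: in_set_conv_nth)
    consider "j = 0" | "j = 1" | "2 \<le> j" by linarith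
    then show "u \<in> C"
    proof cases
      case 1 then show ?thesis using j w \<open>E c u\<close> not_E_w by simp
    next
      case 2 then show ?thesis using j p1 by simp
    next
      case 3
      then have "j = 3" using neighbour_beyond_w[OF p w c(1,2), of j] j \<open>E c u\<close> by simp
      then show ?thesis using j c \<open>E c u\<close> by simp
    qed
  qed
qed

text \<open>If \<open>a\<close> and \<open>b\<close> both saw \<open>p!3\<close>, it would lie in \<open>C\<close> and form a chord with \<open>w\<close>.\<close>

lemma shortest_walk_w_first:
  assumes p: "induced_path E' V' p" and w: "p!0 = w" and len: "4 \<le> length p"
  shows "shortest_walk E' V' p"
proof -
  have "\<not> (E a (p!3) \<and> E b (p!3))"
  proof
    assume "E a (p!3) \<and> E b (p!3)"
    then have "E' (p!0) (p!3)" using w E'_w_iff by (simp add: C_def nbhd_def)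
    then show False using induced_path_chordless[OF p, of 0 3] len by fastforce
  qed
  then obtain c where c: "c \<in> V" "C \<subseteq> nbhd E c" "\<not> E c (p!3)"
    using a_in_V b_in_V C_subset_nbhd_a C_subset_nbhd_b by blast
  then show ?thesis
    using shortest_walk_by_replacement[OF p c(1,2)] replacement_for_w_first[OF p w len c] by blast
qed

lemma shortest_walk_w_inner:
  assumes p: "induced_path E' V' p" and i: "p!i = w" "0 < i" "Suc i < length p"
  shows "shortest_walk E' V' p"
proof -
  define n where "n = length p"
  have right: "\<not> E a (p!j)" if "i + 2 \<le> j" "j < n" for j
    using a_not_adjacent_beyond_w[OF p i(1,2)] that unfolding n_def by blast
  have left: "\<not> E a (p!j)" if "j + 2 \<le> i" for j
  proof -
    have "rev p ! (n - 1 - i) = w" using i unfolding n_def by (simp add: rev_nth)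
    then have "\<not> E a (rev p ! (n - 1 - j))"
      using a_not_adjacent_beyond_w[OF induced_path_rev[OF E'_sym p], of "n - 1 - i" "n - 1 - j"]
        that i unfolding n_def by simp
    moreover have "rev p ! (n - 1 - j) = p ! j" using that i unfolding n_def by (simp add: rev_nth)
    ultimately show ?thesis by simp
  qed
  have nbrs: "p!Suc i \<in> C" "p!(i - 1) \<in> C" using induced_path_neighbours_of_w[OF p i(1)] i by auto
  have "a \<notin> set p"
  proof
    assume "a \<in> set p"
    then obtain j where j: "j < n" "p!j = a" by (auto simp: in_set_conv_nth n_def)
    have "j \<noteq> i" using j i a_in_V w_notin_V by auto
    have "E a (p!Suc i)" "E a (p!(i - 1))" using nbrs C_subset_nbhd_a by (auto simp: nbhd_def)
    then have "j = Suc (Suc i) \<or> Suc i = Suc j" "j = Suc (i - 1) \<or> i - 1 = Suc j"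
      using induced_path_chordless[OF p, of j "Suc i"] induced_path_chordless[OF p, of j "i - 1"]
        j i E_imp_E' unfolding n_def by auto
    then show False using \<open>j \<noteq> i\<close> i by auto
  qed
  moreover have "\<forall>u\<in>set p. E a u \<longrightarrow> u \<in> C"
  proof (intro ballI impI)
    fix u assume u: "u \<in> set p" "E a u"
    then obtain j where j: "j < n" "u = p!j" by (auto simp: in_set_conv_nth n_def)
    consider "j = i" | "j = Suc i" | "Suc j = i" | "i + 2 \<le> j" | "j + 2 \<le> i" by linarith
    then show "u \<in> C"
      by cases (use u j i nbrs right left not_E_w in auto)
  qed
  ultimately show ?thesis using shortest_walk_by_replacement[OF p a_in_V C_subset_nbhd_a] by blast
qed

lemma induced_path_shortest_walk_E':
  assumes p: "induced_path E' V' p"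
  shows "shortest_walk E' V' p"
proof (cases "w \<in> set p")
  case False
  then show ?thesis using shortest_walk_avoiding_w[OF p] by simp
next
  case True
  then obtain i where i: "i < length p" "p!i = w" by (auto simp: in_set_conv_nth)
  consider "length p \<le> 3" | "i = 0" "4 \<le> length p" | "i = length p - 1" "4 \<le> length p"
    | "0 < i" "Suc i < length p" using i(1) by linarith
  then show ?thesis
  proof cases
    case 1
    then show ?thesis using induced_path_shortest_if_length_le_3 E'_irrefl p by blast
  next
    case 2
    then show ?thesis using shortest_walk_w_first[OF p] i by simp
  next
    case 3
    then have "rev p ! 0 = w" using i rev_nth[of 0 p] by fastforce
    then have "shortest_walk E' V' (rev p)"
      using shortest_walk_w_first[OF induced_path_rev[OF E'_sym p]] 3 by simp
    then show ?thesis using shortest_walk_rev E'_sym by blast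
  next
    case 4
    then show ?thesis using shortest_walk_w_inner[OF p i(2)] by simp
  qed
qed

lemma BDH_extension: "BDH V' E' (insert w X) Y"
  unfolding BDH_def
proof (intro conjI)
  have "finite V" using bdh by (simp add: BDH_def simple_graph_def)
  then show "simple_graph V' E'"
    using E'_sym E'_irrefl E_in_V C_subset_V by (auto simp: simple_graph_def E'_def)
  have "c \<notin> X" if "c \<in> C" for c using that a_in_X X_independent by (auto simp: C_def nbhd_def)
  then show "bipartition V' E' (insert w X) Y"
    using X_Y_disjoint X_Un_Y X_independent Y_independent w_notin_V w_notin_C not_E_w
    by (auto simp: bipartition_def E'_def)
  show "distance_hereditary V' E'"
    using E'_sym E'_irrefl induced_path_shortest_walk_E' by (rule distance_hereditaryI)
qed

end

lemma BDH_swap: "BDH V E X Y \<Longrightarrow> BDH V E Y X"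
  by (auto simp: BDH_def bipartition_def)

theorem theorem3:
  fixes V X Y :: "'a set" and E :: "'a \<Rightarrow> 'a \<Rightarrow> bool" and v v' w :: 'a
  assumes "BDH V E X Y" and "v \<in> V" and "v' \<in> V" and "w \<notin> V"
  shows "BDH (star_V V X Y v v' w) (star_E E X Y v v' w) (star_X X Y v v' w) (star_Y X Y v v' w)"
proof -
  have disj: "X \<inter> Y = {}" using assms(1) by (simp add: BDH_def bipartition_def)
  consider "v \<in> X" "v' \<in> X" | "v \<in> Y" "v' \<in> Y" | "\<not> same_class X Y v v'"
    by (auto simp: same_class_def)
  then show ?thesis
  proof cases
    case 1
    then interpret bdh_extension V X Y E v v' w using assms by unfold_locales
    show ?thesis using BDH_extension 1 disj
      by (auto simp: star_V_def star_E_def star_X_def star_Y_def same_class_def E'_def C_def)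
  next
    case 2
    then interpret bdh_extension V Y X E v v' w using assms BDH_swap by unfold_locales
    show ?thesis using BDH_swap[OF BDH_extension] 2 disj
      by (auto simp: star_V_def star_E_def star_X_def star_Y_def same_class_def E'_def C_def)
  next
    case 3
    then show ?thesis using assms(1)
      by (auto simp: star_V_def star_E_def star_X_def star_Y_def same_class_def)
  qed
qed

end
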